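(* Let $S$ be a semigroup generated by a finite set $A$, and let $\eta$ be a congruence on $S$. Then the natural map $\phi:(S,d_A)\to(S/\eta,d_{A/\eta})$, $s\mapsto s/\eta$, is a quasi-isometry if and only if there is a finite bound on the $d_A$-diameters of the $\eta$-classes of $S$.
   Context: For a semigroup $T$ generated by a finite set $B$, $d_B(x,y)=\inf\{|w|:w\in B^*,\ xw=y\}$ ($B^*$ the free monoid on $B$, $\inf\emptyset=\infty$). Here $A/\eta=\{a/\eta:a\in A\}$, a finite generating set of $S/\eta$. The $d_A$-diameter of a set $C\subseteq S$ is $\sup_{x,y\in C}d_A(x,y)$. A map $f:(X,d)\to(X',d')$ is a quasi-isometry if there are $1\le\lambda<\infty$, $0<\epsilon<\infty$, $0\le\mu<\infty$ with $\frac1\lambda d(x,y)-\epsilon\le d'(f(x),f(y))\le\lambda d(x,y)+\epsilon$ for all $x,y$, and for every $x'\in X'$ some $x$ with $\max(d'(x',f(x)),d'(f(x),x'))\le\mu$. *)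

theory Defs
  imports Main "HOL-Library.Extended_Real"
begin

text \<open>Right-multiplication distance in a semigroup given by an operation m,
  w.r.t. a generating set B: inf of lengths of words w over B with x w = y
  (x w computed as x * b1 * ... * bn; the empty word gives x). inf of the empty set is infinity.\<close>
definition word_dist :: "('a \<Rightarrow> 'a \<Rightarrow> 'a) \<Rightarrow> 'a set \<Rightarrow> 'a \<Rightarrow> 'a \<Rightarrow> enat" where
  "word_dist m B x y = (INF w \<in> {w. set w \<subseteq> B \<and> foldl m x w = y}. enat (length w))"

definition generates :: "('a \<Rightarrow> 'a \<Rightarrow> 'a) \<Rightarrow> 'a set \<Rightarrow> bool" where
  "generates m B \<longleftrightarrow> (\<forall>s. \<exists>a w. a \<in> B \<and> set w \<subseteq> B \<and> s = foldl m a w)"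

definition semigroup_congruence :: "('a::semigroup_mult \<times> 'a) set \<Rightarrow> bool" where
  "semigroup_congruence eta \<longleftrightarrow> equiv UNIV eta \<and>
     (\<forall>a b c. (a, b) \<in> eta \<longrightarrow> (c * a, c * b) \<in> eta \<and> (a * c, b * c) \<in> eta)"

definition quot_mult :: "('a::semigroup_mult \<times> 'a) set \<Rightarrow> 'a set \<Rightarrow> 'a set \<Rightarrow> 'a set" where
  "quot_mult eta X Y = eta `` {(SOME x. x \<in> X) * (SOME y. y \<in> Y)}"

definition diameter :: "('a \<Rightarrow> 'a \<Rightarrow> enat) \<Rightarrow> 'a set \<Rightarrow> enat" where
  "diameter d C = (SUP x \<in> C. SUP y \<in> C. d x y)"

text \<open>Quasi-isometry between (X,d) and (X',d') (asymmetric extended distances).\<close>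
definition quasi_isometry ::
  "'a set \<Rightarrow> ('a \<Rightarrow> 'a \<Rightarrow> enat) \<Rightarrow> 'b set \<Rightarrow> ('b \<Rightarrow> 'b \<Rightarrow> enat) \<Rightarrow> ('a \<Rightarrow> 'b) \<Rightarrow> bool" where
  "quasi_isometry X d X' d' f \<longleftrightarrow> f ` X \<subseteq> X' \<and>
    (\<exists>lam eps mu :: real. 1 \<le> lam \<and> 0 < eps \<and> 0 \<le> mu \<and>
      (\<forall>x\<in>X. \<forall>y\<in>X.
         ereal (1 / lam) * ereal_of_enat (d x y) - ereal eps \<le> ereal_of_enat (d' (f x) (f y)) \<and>
         ereal_of_enat (d' (f x) (f y)) \<le> ereal lam * ereal_of_enat (d x y) + ereal eps) \<and>
      (\<forall>x'\<in>X'. \<exists>x\<in>X. max (ereal_of_enat (d' x' (f x))) (ereal_of_enat (d' (f x) x')) \<le> ereal mu))"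

end

theory Submission
  imports Defs
begin

text \<open>The quotient map never increases distance, since every word over A maps to a word over
  A/eta of the same length. Conversely a shortest word over A/eta from x/eta to y/eta lifts to a
  word over A from x to some element of the class of y, so d_A(x,y) exceeds the quotient distance
  by at most the diameter of that class; with bounded diameters both distances thus agree up to an
  additive constant. On the other hand, points in one class are at quotient distance 0, so a
  quasi-isometric lower bound forces their d_A-distance below lambda epsilon.\<close>

lemma word_dist_le_length:
  assumes "set w \<subseteq> B" "foldl m x w = y"
  shows "word_dist m B x y \<le> enat (length w)"
  unfolding word_dist_def using assms by (intro INF_lower2[of w]) auto

lemma word_dist_witness:
  assumes "word_dist m B x y \<noteq> \<infinity>"
  obtains w where "set w \<subseteq> B" "foldl m x w = y" "word_dist m B x y = enat (length w)"
proof -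
  let ?W = "{w. set w \<subseteq> B \<and> foldl m x w = y}"
  have "?W \<noteq> {}" using assms unfolding word_dist_def by (metis INF_empty top_enat_def)
  then obtain w0 where "w0 \<in> ?W" by blast
  hence "Inf ((\<lambda>w. enat (length w)) ` ?W) \<in> (\<lambda>w. enat (length w)) ` ?W"
    by (intro wellorder_InfI) auto
  then obtain w where "w \<in> ?W" "word_dist m B x y = enat (length w)"
    unfolding word_dist_def by auto
  then show ?thesis using that by blast
qed

lemma word_dist_self [simp]: "word_dist m B x x = 0"
  using word_dist_le_length[of "[]" B m x x] by (simp add: zero_enat_def[symmetric])

lemma word_dist_le_length_plus:
  assumes "set w \<subseteq> B"
  shows "word_dist m B x y \<le> enat (length w) + word_dist m B (foldl m x w) y"
proof (cases "word_dist m B (foldl m x w) y = \<infinity>")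
  case False
  then obtain v where v: "set v \<subseteq> B" "foldl m (foldl m x w) v = y"
    "word_dist m B (foldl m x w) y = enat (length v)" by (rule word_dist_witness)
  have "word_dist m B x y \<le> enat (length (w @ v))"
    using v assms by (intro word_dist_le_length) auto
  then show ?thesis using v by simp
qed simp

lemma diameter_le_iff: "diameter d C \<le> K \<longleftrightarrow> (\<forall>x\<in>C. \<forall>y\<in>C. d x y \<le> K)"
  unfolding diameter_def by (simp add: SUP_le_iff)

lemma quasi_isometry_fibres_bounded:
  assumes "quasi_isometry X d X' d' f" and "\<And>z. z \<in> X' \<Longrightarrow> d' z z = 0"
  shows "\<exists>K::nat. \<forall>x\<in>X. \<forall>y\<in>X. f x = f y \<longrightarrow> d x y \<le> enat K"
proof -
  obtain lam eps :: real where lam: "1 \<le> lam" and img: "f ` X \<subseteq> X'" and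
    lower: "\<And>x y. x \<in> X \<Longrightarrow> y \<in> X \<Longrightarrow>
       ereal (1 / lam) * ereal_of_enat (d x y) - ereal eps \<le> ereal_of_enat (d' (f x) (f y))"
    using assms(1) unfolding quasi_isometry_def by blast
  have "d x y \<le> enat (nat \<lceil>lam * eps\<rceil>)" if "x \<in> X" "y \<in> X" "f x = f y" for x y
  proof -
    have "ereal (1 / lam) * ereal_of_enat (d x y) - ereal eps \<le> 0"
      using lower[OF that(1,2)] that img assms(2) by auto
    moreover have "ereal (1 / lam) > 0" using lam by simp
    ultimately obtain n where n: "d x y = enat n" "(1 / lam) * real n - eps \<le> 0"
      by (cases "d x y") auto
    hence "real n \<le> lam * eps" using lam by (simp add: field_simps)
    then show ?thesis using n(1) by simp linarith
  qed
  then show ?thesis by blast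
qed

text \<open>The constants are lambda = 1, epsilon = K + 1 (epsilon must be positive) and mu = 0.\<close>
lemma quasi_isometry_if_additive_bounds:
  assumes onto: "f ` X = X'"
    and upper: "\<And>x y. x \<in> X \<Longrightarrow> y \<in> X \<Longrightarrow> d' (f x) (f y) \<le> d x y"
    and lower: "\<And>x y. x \<in> X \<Longrightarrow> y \<in> X \<Longrightarrow> d x y \<le> d' (f x) (f y) + enat K"
    and refl: "\<And>z. z \<in> X' \<Longrightarrow> d' z z = 0"
  shows "quasi_isometry X d X' d' f"
  unfolding quasi_isometry_def
proof (rule conjI, simp add: onto, rule exI[of _ 1], rule exI[of _ "real K + 1"],
    rule exI[of _ 0], intro conjI ballI)
  fix x y assume xy: "x \<in> X" "y \<in> X"
  show "ereal (1 / 1) * ereal_of_enat (d x y) - ereal (real K + 1)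
        \<le> ereal_of_enat (d' (f x) (f y))"
  proof (cases "d' (f x) (f y)")
    case (enat n')
    then obtain n where "d x y = enat n" "n \<le> n' + K"
      using lower[OF xy] by (cases "d x y") auto
    then show ?thesis using enat by simp
  qed simp
  show "ereal_of_enat (d' (f x) (f y)) \<le> ereal 1 * ereal_of_enat (d x y) + ereal (real K + 1)"
  proof (cases "d x y")
    case (enat n)
    then obtain n' where "d' (f x) (f y) = enat n'" "n' \<le> n"
      using upper[OF xy] by (cases "d' (f x) (f y)") auto
    then show ?thesis using enat by simp
  qed simp
next
  fix z assume z: "z \<in> X'"
  then obtain x where "x \<in> X" "z = f x" using onto by blast
  then show "\<exists>x\<in>X. max (ereal_of_enat (d' z (f x))) (ereal_of_enat (d' (f x) z)) \<le> ereal 0"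
    using refl[OF z] by (intro bexI[of _ x]) (auto simp: zero_ereal_def[symmetric])
qed simp_all

context
  fixes eta :: "('a::semigroup_mult \<times> 'a) set"
  assumes cong: "semigroup_congruence eta"
begin

lemma congruence_equiv: "equiv UNIV eta"
  using cong unfolding semigroup_congruence_def by blast

lemma quot_mult_classes: "quot_mult eta (eta``{x}) (eta``{y}) = eta``{x * y}"
proof -
  have nonempty: "\<exists>u. u \<in> eta``{z}" for z
    using congruence_equiv by (meson equiv_class_self UNIV_I)
  define x' where "x' = (SOME u. u \<in> eta``{x})"
  define y' where "y' = (SOME u. u \<in> eta``{y})"
  have "(x, x') \<in> eta" "(y, y') \<in> eta"
    unfolding x'_def y'_def using someI_ex[OF nonempty] by auto
  hence "(x * y, x' * y) \<in> eta" "(x' * y, x' * y') \<in> eta"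
    using cong unfolding semigroup_congruence_def by blast+
  hence "(x * y, x' * y') \<in> eta"
    using congruence_equiv by (meson equiv_def transD)
  then show ?thesis
    unfolding quot_mult_def x'_def[symmetric] y'_def[symmetric]
    using equiv_class_eq[OF congruence_equiv] by simp
qed

lemma foldl_quot_mult_classes:
  "foldl (quot_mult eta) (eta``{x}) (map (\<lambda>a. eta``{a}) w) = eta``{foldl (*) x w}"
  by (induction w arbitrary: x) (simp_all add: quot_mult_classes)

lemma quot_word_dist_le:
  "word_dist (quot_mult eta) ((\<lambda>a. eta``{a}) ` A) (eta``{x}) (eta``{y}) \<le> word_dist (*) A x y"
  unfolding word_dist_def[of "(*)"]
proof (rule INF_greatest)
  fix w assume "w \<in> {w. set w \<subseteq> A \<and> foldl (*) x w = y}"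
  then have "word_dist (quot_mult eta) ((\<lambda>a. eta``{a}) ` A) (eta``{x}) (eta``{y})
             \<le> enat (length (map (\<lambda>a. eta``{a}) w))"
    by (intro word_dist_le_length) (auto simp: foldl_quot_mult_classes)
  then show "word_dist (quot_mult eta) ((\<lambda>a. eta``{a}) ` A) (eta``{x}) (eta``{y})
             \<le> enat (length w)" by simp
qed

lemma quot_word_dist_lift:
  assumes "word_dist (quot_mult eta) ((\<lambda>a. eta``{a}) ` A) (eta``{x}) (eta``{y}) = enat n"
  obtains w where "set w \<subseteq> A" "length w = n" "(foldl (*) x w, y) \<in> eta"
proof -
  have "word_dist (quot_mult eta) ((\<lambda>a. eta``{a}) ` A) (eta``{x}) (eta``{y}) \<noteq> \<infinity>"
    using assms by simp
  then obtain W where W: "set W \<subseteq> (\<lambda>a. eta``{a}) ` A"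
    "foldl (quot_mult eta) (eta``{x}) W = eta``{y}"
    "word_dist (quot_mult eta) ((\<lambda>a. eta``{a}) ` A) (eta``{x}) (eta``{y}) = enat (length W)"
    by (rule word_dist_witness)
  from W(1) have "W \<in> map (\<lambda>a. eta``{a}) ` lists A"
    by (simp add: lists_image[symmetric] in_listsI subset_code(1))
  then obtain w where w: "set w \<subseteq> A" "map (\<lambda>a. eta``{a}) w = W"
    by auto
  have "eta``{foldl (*) x w} = eta``{y}"
    using W(2) w(2) foldl_quot_mult_classes[of x w] by simp
  hence "(foldl (*) x w, y) \<in> eta"
    using eq_equiv_class_iff[OF congruence_equiv] by blast
  then show ?thesis using that w W(3) assms by auto
qed

lemma word_dist_le_quot_word_dist_plus_diameter:
  assumes "\<forall>C \<in> UNIV // eta. diameter (word_dist (*) A) C \<le> enat K"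
  shows "word_dist (*) A x y
         \<le> word_dist (quot_mult eta) ((\<lambda>a. eta``{a}) ` A) (eta``{x}) (eta``{y}) + enat K"
proof (cases "word_dist (quot_mult eta) ((\<lambda>a. eta``{a}) ` A) (eta``{x}) (eta``{y})")
  case (enat n)
  then obtain w where w: "set w \<subseteq> A" "length w = n" "(foldl (*) x w, y) \<in> eta"
    by (rule quot_word_dist_lift)
  have "foldl (*) x w \<in> eta``{y}" "y \<in> eta``{y}" "eta``{y} \<in> UNIV // eta"
    using w(3) congruence_equiv by (auto simp: quotientI equiv_def sym_def refl_on_def)
  hence "word_dist (*) A (foldl (*) x w) y \<le> enat K"
    using assms by (auto simp: diameter_le_iff)
  then have "word_dist (*) A x y \<le> enat n + enat K"
    using word_dist_le_length_plus[OF w(1), where x=x and y=y] w(2)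
    by (metis add_left_mono order_trans)
  then show ?thesis using enat by simp
qed simp

end

theorem proposition8p3:
  fixes A :: "'a::semigroup_mult set" and eta :: "('a \<times> 'a) set"
  assumes "finite A" and "generates (*) A" and "semigroup_congruence eta"
  shows "quasi_isometry UNIV (word_dist (*) A)
           (UNIV // eta) (word_dist (quot_mult eta) ((\<lambda>a. eta `` {a}) ` A))
           (\<lambda>s. eta `` {s})
         \<longleftrightarrow> (\<exists>K::nat. \<forall>C \<in> UNIV // eta. diameter (word_dist (*) A) C \<le> enat K)"
proof
  assume "quasi_isometry UNIV (word_dist (*) A)
            (UNIV // eta) (word_dist (quot_mult eta) ((\<lambda>a. eta `` {a}) ` A)) (\<lambda>s. eta `` {s})"
  then have "\<exists>K::nat. \<forall>x\<in>UNIV. \<forall>y\<in>UNIV. eta``{x} = eta``{y} \<longrightarrow> word_dist (*) A x y \<le> enat K"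
    by (rule quasi_isometry_fibres_bounded[where f = "\<lambda>s. eta``{s}"]) simp
  then obtain K :: nat where K: "\<And>x y. eta``{x} = eta``{y} \<Longrightarrow> word_dist (*) A x y \<le> enat K"
    by blast
  have "diameter (word_dist (*) A) C \<le> enat K" if "C \<in> UNIV // eta" for C
  proof -
    have "eta``{x} = eta``{y}" if "x \<in> C" "y \<in> C" for x y
      using \<open>C \<in> UNIV // eta\<close> that congruence_equiv[OF assms(3)]
      by (intro equiv_class_eq) (auto intro: in_quotient_imp_in_rel)
    then show ?thesis unfolding diameter_le_iff using K by blast
  qed
  then show "\<exists>K::nat. \<forall>C \<in> UNIV // eta. diameter (word_dist (*) A) C \<le> enat K" by blast
next
  assume "\<exists>K::nat. \<forall>C \<in> UNIV // eta. diameter (word_dist (*) A) C \<le> enat K"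
  then obtain K where K: "\<forall>C \<in> UNIV // eta. diameter (word_dist (*) A) C \<le> enat K" ..
  show "quasi_isometry UNIV (word_dist (*) A)
      (UNIV // eta) (word_dist (quot_mult eta) ((\<lambda>a. eta `` {a}) ` A)) (\<lambda>s. eta `` {s})"
  proof (rule quasi_isometry_if_additive_bounds)
    show "(\<lambda>s. eta``{s}) ` UNIV = UNIV // eta" by (auto simp: quotient_def)
  qed (rule quot_word_dist_le[OF assms(3)] word_dist_le_quot_word_dist_plus_diameter[OF assms(3) K]
      word_dist_self)+
qed

end
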